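(* Let $H,K$ be $n$-Hilbert spaces, fix $a_2,\dots,a_n\in H$, $b_2,\dots,b_n\in K$, $C_1\in\mathcal{GB}(H_F)$, $C_2\in\mathcal{GB}(K_G)$. Let $\{f_i\}_{i=1}^\infty,\{e_i\}_{i=1}^\infty$ be a pair of dual $C_1$-controlled frames associated to $(a_2,\dots,a_n)$ for $H$ and $\{g_j\}_{j=1}^\infty,\{h_j\}_{j=1}^\infty$ a pair of dual $C_2$-controlled frames associated to $(b_2,\dots,b_n)$ for $K$. Suppose $U\in\mathcal{B}(H_F)$ and $V\in\mathcal{B}(K_G)$ are unitary, $C_1$ commutes with $U$ and $C_2$ commutes with $V$. Then $\Lambda=\{(U\otimes V)(f_i\otimes g_j)\}_{i,j=1}^\infty$ and $\Gamma=\{(U\otimes V)(e_i\otimes h_j)\}_{i,j=1}^\infty$ form a pair of dual $(C_1\otimes C_2)$-controlled frames associated to $(a_2\otimes b_2,\dots,a_n\otimes b_n)$ for $H\otimes K$.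
   Context: Let $n\ge2$. For a complex $n$-Hilbert space $H$ with $n$-inner product $\langle\cdot,\cdot|\cdot,\dots,\cdot\rangle_1$ and $n$-norm $\|x_1,\dots,x_n\|_1=\langle x_1,x_1|x_2,\dots,x_n\rangle_1^{1/2}$, and fixed $a_2,\dots,a_n\in H$, $F=\{a_2,\dots,a_n\}$: $\langle x,y\rangle_F=\langle x,y|a_2,\dots,a_n\rangle_1$ is a semi-inner product on $H$ inducing an inner product on $H/L_F$ ($L_F=\mathrm{span}\,F$); identifying $H/L_F$ with an algebraic complement of $L_F$, $H_F$ is its Hilbert completion, with norm written $\|f,a_2,\dots,a_n\|_1$. Likewise $K$ with $\langle\cdot,\cdot|\cdot,\dots,\cdot\rangle_2$, $G=\{b_2,\dots,b_n\}$, Hilbert space $K_G$. $H\otimes K$ carries the $n$-inner product $\langle f_1\otimes g_1,f_2\otimes g_2|f_3\otimes g_3,\dots,f_n\otimes g_n\rangle=\langle f_1,f_2|f_3,\dots,f_n\rangle_1\langle g_1,g_2|g_3,\dots,g_n\rangle_2$ and $n$-norm $\|f_1\otimes g_1,\dots,f_n\otimes g_n\|=\|f_1,\dots,f_n\|_1\|g_1,\dots,g_n\|_2$; $H_F\otimes K_G$ is the Hilbert tensor product and $(Q\otimes T)(f\otimes g)=Qf\otimes Tg$. $\mathcal{B}(\cdot)$: bounded operators; $\mathcal{GB}(\cdot)$: those with bounded inverse. For $C\in\mathcal{GB}(H_F)$, $\{f_i\}\subseteq H$ is a $C$-controlled frame associated to $(a_2,\dots,a_n)$ for $H$ if there are $0<A\le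 B<\infty$ with $A\|f,a_2,\dots,a_n\|_1^2\le\sum_i\langle f,f_i|a_2,\dots,a_n\rangle_1\langle Cf_i,f|a_2,\dots,a_n\rangle_1\le B\|f,a_2,\dots,a_n\|_1^2$ for all $f\in H_F$; $\{f_i\},\{e_i\}$ are a pair of dual $C$-controlled frames if both are $C$-controlled frames and $f=\sum_i\langle f,e_i|a_2,\dots,a_n\rangle_1Cf_i$ for all $f\in H_F$ (similarly for $K$). A family $\{\phi_{ij}\}\subseteq H\otimes K$ is a $(C_1\otimes C_2)$-controlled frame associated to $(a_2\otimes b_2,\dots,a_n\otimes b_n)$ if there are $0<A\le B<\infty$ with $A\|f\otimes g,a_2\otimes b_2,\dots\|^2\le\sum_{i,j}\langle f\otimes g,\phi_{ij}|a_2\otimes b_2,\dots,a_n\otimes b_n\rangle\langle(C_1\otimes C_2)\phi_{ij},f\otimes g|a_2\otimes b_2,\dots,a_n\otimes b_n\rangle\le B\|f\otimes g,a_2\otimes b_2,\dots\|^2$ for all $f\in H_F$, $g\in K_G$. Two such families $\{\phi_{ij}\},\{\psi_{ij}\}$ form a pair of dual $(C_1\otimes C_2)$-controlled frames if $f\otimes g=\sum_{i,j}\langle f\otimes g,\psi_{ij}|a_2\otimes b_2,\dots,a_n\otimes b_n\rangle(C_1\otimes C_2)\phi_{ij}$ for all $f\in H_F$, $g\in K_G$. *)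

theory Defs
  imports Complex_Main "HOL-Library.Multiset"
begin

text \<open>A complex vector space is given by a carrier type of class ab_group_add together
with a scalar multiplication sc; an inner product ip is linear in the first argument.\<close>

definition cnorm :: "('a \<Rightarrow> 'a \<Rightarrow> complex) \<Rightarrow> 'a \<Rightarrow> real" where
  "cnorm ip x = sqrt (Re (ip x x))"

definition complex_inner_space ::
  "(complex \<Rightarrow> 'a::ab_group_add \<Rightarrow> 'a) \<Rightarrow> ('a \<Rightarrow> 'a \<Rightarrow> complex) \<Rightarrow> bool" where
  "complex_inner_space sc ip \<longleftrightarrow>
     vector_space sc \<and>
     (\<forall>x y z. ip (x + y) z = ip x z + ip y z) \<and>
     (\<forall>a x y. ip (sc a x) y = a * ip x y) \<and>
     (\<forall>x y. ip y x = cnj (ip x y)) \<and>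
     (\<forall>x. Im (ip x x) = 0 \<and> Re (ip x x) \<ge> 0) \<and>
     (\<forall>x. ip x x = 0 \<longrightarrow> x = 0)"

definition hilbert_space ::
  "(complex \<Rightarrow> 'a::ab_group_add \<Rightarrow> 'a) \<Rightarrow> ('a \<Rightarrow> 'a \<Rightarrow> complex) \<Rightarrow> bool" where
  "hilbert_space sc ip \<longleftrightarrow>
     complex_inner_space sc ip \<and>
     (\<forall>X::nat \<Rightarrow> 'a.
        (\<forall>e>0. \<exists>N. \<forall>m\<ge>N. \<forall>k\<ge>N. cnorm ip (X m - X k) < e) \<longrightarrow>
        (\<exists>l. (\<lambda>k. cnorm ip (X k - l)) \<longlonglongrightarrow> 0))"

definition sums_in :: "('a::ab_group_add \<Rightarrow> real) \<Rightarrow> (nat \<Rightarrow> 'a) \<Rightarrow> 'a \<Rightarrow> bool" where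
  "sums_in nrm x s \<longleftrightarrow> (\<lambda>N. nrm ((\<Sum>i<N. x i) - s)) \<longlonglongrightarrow> 0"

definition bounded_op ::
  "(complex \<Rightarrow> 'a::ab_group_add \<Rightarrow> 'a) \<Rightarrow> ('a \<Rightarrow> 'a \<Rightarrow> complex) \<Rightarrow> ('a \<Rightarrow> 'a) \<Rightarrow> bool" where
  "bounded_op sc ip T \<longleftrightarrow>
     Vector_Spaces.linear sc sc T \<and> (\<exists>M. \<forall>x. cnorm ip (T x) \<le> M * cnorm ip x)"

definition GB_op ::
  "(complex \<Rightarrow> 'a::ab_group_add \<Rightarrow> 'a) \<Rightarrow> ('a \<Rightarrow> 'a \<Rightarrow> complex) \<Rightarrow> ('a \<Rightarrow> 'a) \<Rightarrow> bool" where
  "GB_op sc ip T \<longleftrightarrow>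
     bounded_op sc ip T \<and>
     (\<exists>S. bounded_op sc ip S \<and> (\<forall>x. S (T x) = x) \<and> (\<forall>x. T (S x) = x))"

definition unitary_op ::
  "(complex \<Rightarrow> 'a::ab_group_add \<Rightarrow> 'a) \<Rightarrow> ('a \<Rightarrow> 'a \<Rightarrow> complex) \<Rightarrow> ('a \<Rightarrow> 'a) \<Rightarrow> bool" where
  "unitary_op sc ip U \<longleftrightarrow>
     bounded_op sc ip U \<and>
     (\<exists>U'. (\<forall>x y. ip (U x) y = ip x (U' y)) \<and> (\<forall>x. U' (U x) = x) \<and> (\<forall>x. U (U' x) = x))"

text \<open>An n-inner product is written nip x y zs = <x,y|z_2,...,z_n> with zs of length n-1.\<close>

definition lin_dep_list :: "(complex \<Rightarrow> 'a::ab_group_add \<Rightarrow> 'a) \<Rightarrow> 'a list \<Rightarrow> bool" where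
  "lin_dep_list sc xs \<longleftrightarrow>
     (\<exists>c::nat \<Rightarrow> complex. (\<exists>i<length xs. c i \<noteq> 0) \<and> (\<Sum>i<length xs. sc (c i) (xs ! i)) = 0)"

definition nnorm :: "('a \<Rightarrow> 'a \<Rightarrow> 'a list \<Rightarrow> complex) \<Rightarrow> 'a \<Rightarrow> 'a list \<Rightarrow> real" where
  "nnorm nip x zs = sqrt (Re (nip x x zs))"

definition n_inner_product_space ::
  "nat \<Rightarrow> (complex \<Rightarrow> 'a::ab_group_add \<Rightarrow> 'a) \<Rightarrow> ('a \<Rightarrow> 'a \<Rightarrow> 'a list \<Rightarrow> complex) \<Rightarrow> bool" where
  "n_inner_product_space n sc nip \<longleftrightarrow>
     n \<ge> 2 \<and> vector_space sc \<and>
     (\<exists>xs. length xs = n \<and> \<not> lin_dep_list sc xs) \<and>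
     (\<forall>x zs. length zs = n - 1 \<longrightarrow>
        Im (nip x x zs) = 0 \<and> Re (nip x x zs) \<ge> 0 \<and>
        (nip x x zs = 0 \<longleftrightarrow> lin_dep_list sc (x # zs))) \<and>
     (\<forall>x zs ys. length zs = n - 1 \<longrightarrow> mset ys = mset (x # zs) \<longrightarrow>
        nip (hd ys) (hd ys) (tl ys) = nip x x zs) \<and>
     (\<forall>x y zs. length zs = n - 1 \<longrightarrow> nip x y zs = cnj (nip y x zs)) \<and>
     (\<forall>a x y zs. length zs = n - 1 \<longrightarrow> nip (sc a x) y zs = a * nip x y zs) \<and>
     (\<forall>x x' y zs. length zs = n - 1 \<longrightarrow> nip (x + x') y zs = nip x y zs + nip x' y zs)"

definition n_hilbert_space ::
  "nat \<Rightarrow> (complex \<Rightarrow> 'a::ab_group_add \<Rightarrow> 'a) \<Rightarrow> ('a \<Rightarrow> 'a \<Rightarrow> 'a list \<Rightarrow> complex) \<Rightarrow> bool" where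
  "n_hilbert_space n sc nip \<longleftrightarrow>
     n_inner_product_space n sc nip \<and>
     (\<forall>X::nat \<Rightarrow> 'a.
        (\<forall>zs. length zs = n - 1 \<longrightarrow>
           (\<forall>e>0. \<exists>N. \<forall>m\<ge>N. \<forall>k\<ge>N. nnorm nip (X m - X k) zs < e)) \<longrightarrow>
        (\<exists>x. \<forall>zs. length zs = n - 1 \<longrightarrow> (\<lambda>k. nnorm nip (X k - x) zs) \<longlonglongrightarrow> 0))"

text \<open>(scF, ipF) is the Hilbert completion H_F of H/L_F: q is the canonical (linear) map
  H \<rightarrow> H_F, it carries the semi-inner product <x,y|a_2,...,a_n> to the inner product of H_F,
  and its range is dense.\<close>
definition F_completion ::
  "('h \<Rightarrow> 'h \<Rightarrow> 'h list \<Rightarrow> complex) \<Rightarrow> 'h list \<Rightarrow> (complex \<Rightarrow> 'h::ab_group_add \<Rightarrow> 'h) \<Rightarrow>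
   (complex \<Rightarrow> 'f::ab_group_add \<Rightarrow> 'f) \<Rightarrow> ('f \<Rightarrow> 'f \<Rightarrow> complex) \<Rightarrow> ('h \<Rightarrow> 'f) \<Rightarrow> bool" where
  "F_completion nip as scH scF ipF q \<longleftrightarrow>
     hilbert_space scF ipF \<and> Vector_Spaces.linear scH scF q \<and>
     (\<forall>x y. ipF (q x) (q y) = nip x y as) \<and>
     (\<forall>f e. e > 0 \<longrightarrow> (\<exists>x. cnorm ipF (f - q x) < e))"

text \<open>(scW, ipW) with tens is the Hilbert tensor product H_F \<otimes> K_G: tens is bilinear,
  <x\<otimes>y, x'\<otimes>y'> = <x,x'><y,y'>, and the span of elementary tensors is dense.\<close>
definition hilbert_tensor ::
  "(complex \<Rightarrow> 'f::ab_group_add \<Rightarrow> 'f) \<Rightarrow> ('f \<Rightarrow> 'f \<Rightarrow> complex) \<Rightarrow>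
   (complex \<Rightarrow> 'g::ab_group_add \<Rightarrow> 'g) \<Rightarrow> ('g \<Rightarrow> 'g \<Rightarrow> complex) \<Rightarrow>
   (complex \<Rightarrow> 'w::ab_group_add \<Rightarrow> 'w) \<Rightarrow> ('w \<Rightarrow> 'w \<Rightarrow> complex) \<Rightarrow> ('f \<Rightarrow> 'g \<Rightarrow> 'w) \<Rightarrow> bool" where
  "hilbert_tensor scF ipF scG ipG scW ipW tens \<longleftrightarrow>
     hilbert_space scF ipF \<and> hilbert_space scG ipG \<and> hilbert_space scW ipW \<and>
     (\<forall>y. Vector_Spaces.linear scF scW (\<lambda>x. tens x y)) \<and>
     (\<forall>x. Vector_Spaces.linear scG scW (tens x)) \<and>
     (\<forall>x y x' y'. ipW (tens x y) (tens x' y') = ipF x x' * ipG y y') \<and>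
     (\<forall>w e. e > 0 \<longrightarrow>
        (\<exists>p xs ys. cnorm ipW (w - (\<Sum>k<(p::nat). tens (xs k) (ys k))) < e))"

definition tensor_op ::
  "(complex \<Rightarrow> 'w::ab_group_add \<Rightarrow> 'w) \<Rightarrow> ('w \<Rightarrow> 'w \<Rightarrow> complex) \<Rightarrow> ('f \<Rightarrow> 'g \<Rightarrow> 'w) \<Rightarrow>
   ('f \<Rightarrow> 'f) \<Rightarrow> ('g \<Rightarrow> 'g) \<Rightarrow> 'w \<Rightarrow> 'w" where
  "tensor_op scW ipW tens Q R =
     (THE T. bounded_op scW ipW T \<and> (\<forall>x y. T (tens x y) = tens (Q x) (R y)))"

text \<open>phi i is the image in H_F of f_i \<in> H; the frame sum is an (ordered) series whose value
  is real and lies between the bounds.\<close>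
definition ctrl_frame ::
  "('f::ab_group_add \<Rightarrow> 'f \<Rightarrow> complex) \<Rightarrow> ('f \<Rightarrow> 'f) \<Rightarrow> (nat \<Rightarrow> 'f) \<Rightarrow> bool" where
  "ctrl_frame ip C phi \<longleftrightarrow>
     (\<exists>A B. 0 < A \<and> A \<le> B \<and>
        (\<forall>f. \<exists>s. (\<lambda>i. ip f (phi i) * ip (C (phi i)) f) sums s \<and> Im s = 0 \<and>
              A * (cnorm ip f)\<^sup>2 \<le> Re s \<and> Re s \<le> B * (cnorm ip f)\<^sup>2))"

definition dual_ctrl_frames ::
  "(complex \<Rightarrow> 'f::ab_group_add \<Rightarrow> 'f) \<Rightarrow> ('f \<Rightarrow> 'f \<Rightarrow> complex) \<Rightarrow> ('f \<Rightarrow> 'f) \<Rightarrow>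
   (nat \<Rightarrow> 'f) \<Rightarrow> (nat \<Rightarrow> 'f) \<Rightarrow> bool" where
  "dual_ctrl_frames sc ip C phi psi \<longleftrightarrow>
     ctrl_frame ip C phi \<and> ctrl_frame ip C psi \<and>
     (\<forall>f. sums_in (cnorm ip) (\<lambda>i. sc (ip f (psi i)) (C (phi i))) f)"

text \<open>Double-indexed families in the tensor product; the double series over (i,j) is read as
  the iterated series (sum over i of sum over j); test vectors are elementary tensors f\<otimes>g.\<close>
definition ctrl_frame2 ::
  "('w::ab_group_add \<Rightarrow> 'w \<Rightarrow> complex) \<Rightarrow> ('f \<Rightarrow> 'g \<Rightarrow> 'w) \<Rightarrow> ('w \<Rightarrow> 'w) \<Rightarrow>
   (nat \<Rightarrow> nat \<Rightarrow> 'w) \<Rightarrow> bool" where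
  "ctrl_frame2 ipW tens T phi \<longleftrightarrow>
     (\<exists>A B. 0 < A \<and> A \<le> B \<and>
        (\<forall>f g. \<exists>r s.
           (\<forall>i. (\<lambda>j. ipW (tens f g) (phi i j) * ipW (T (phi i j)) (tens f g)) sums r i) \<and>
           r sums s \<and> Im s = 0 \<and>
           A * (cnorm ipW (tens f g))\<^sup>2 \<le> Re s \<and> Re s \<le> B * (cnorm ipW (tens f g))\<^sup>2))"

definition dual_ctrl_frames2 ::
  "(complex \<Rightarrow> 'w::ab_group_add \<Rightarrow> 'w) \<Rightarrow> ('w \<Rightarrow> 'w \<Rightarrow> complex) \<Rightarrow> ('f \<Rightarrow> 'g \<Rightarrow> 'w) \<Rightarrow>
   ('w \<Rightarrow> 'w) \<Rightarrow> (nat \<Rightarrow> nat \<Rightarrow> 'w) \<Rightarrow> (nat \<Rightarrow> nat \<Rightarrow> 'w) \<Rightarrow> bool" where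
  "dual_ctrl_frames2 scW ipW tens T phi psi \<longleftrightarrow>
     ctrl_frame2 ipW tens T phi \<and> ctrl_frame2 ipW tens T psi \<and>
     (\<forall>f g. \<exists>r.
        (\<forall>i. sums_in (cnorm ipW) (\<lambda>j. scW (ipW (tens f g) (psi i j)) (T (phi i j))) (r i)) \<and>
        sums_in (cnorm ipW) r (tens f g))"

end

theory Submission
  imports Defs
begin

(* The unitaries only relabel the frames: with U* the adjoint, the frame sums of U f_i at f are
   those of f_i at U* f, and since U commutes with C1 the reconstruction series of the pair
   (U f_i, U e_i) at f is U applied to that of (f_i, e_i) at U* f. On an elementary tensor
   f \<otimes> g the terms of the tensor frame sums and of the reconstruction series are products of
   the terms for f and for g, so the claim reduces to products of series.

   What requires work is that tensor_op really acts as (Q \<otimes> R)(x \<otimes> y) = Q x \<otimes> R y. On finite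
   sums of elementary tensors, Q \<otimes> I is bounded by the bound of Q: splitting off, one at a
   time, the components of the right factors along a fixed vector (Gram-Schmidt) yields
   orthogonal pieces on which the estimate is immediate. Hence Q \<otimes> R is bounded on the dense
   subspace of such sums and extends to a bounded operator by completeness; two bounded operators
   agreeing on a dense subspace coincide, so this extension is the one selected by tensor_op. *)

section \<open>Complex inner product spaces\<close>

locale complex_inner =
  fixes sc :: "complex \<Rightarrow> 'a::ab_group_add \<Rightarrow> 'a" and ip :: "'a \<Rightarrow> 'a \<Rightarrow> complex"
  assumes complex_inner_space: "complex_inner_space sc ip"
begin

sublocale vector_space sc
  using complex_inner_space unfolding complex_inner_space_def by blast

lemma ip_add_left: "ip (x + y) z = ip x z + ip y z"
  and ip_scale_left: "ip (sc a x) y = a * ip x y"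
  and ip_cnj: "ip y x = cnj (ip x y)"
  and ip_self_Im: "Im (ip x x) = 0"
  and ip_self_Re_nonneg: "Re (ip x x) \<ge> 0"
  and ip_self_eq_0D: "ip x x = 0 \<Longrightarrow> x = 0"
  using complex_inner_space unfolding complex_inner_space_def by blast+

lemma ip_add_right: "ip x (y + z) = ip x y + ip x z"
  by (metis ip_add_left ip_cnj complex_cnj_add)

lemma ip_scale_right: "ip x (sc a y) = cnj a * ip x y"
  by (metis ip_scale_left ip_cnj complex_cnj_mult)

lemma ip_zero_left [simp]: "ip 0 y = 0"
  using ip_scale_left[of 0 0 y] by simp

lemma ip_zero_right [simp]: "ip x 0 = 0"
  using ip_scale_right[of x 0 0] by simp

lemma ip_diff_left: "ip (x - y) z = ip x z - ip y z"
  using ip_add_left[of "x - y" y z] by simp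

lemma ip_diff_right: "ip x (y - z) = ip x y - ip x z"
  using ip_add_right[of x "y - z" z] by simp

lemma cnorm_nonneg: "cnorm ip x \<ge> 0"
  by (simp add: cnorm_def ip_self_Re_nonneg)

lemma cnorm_power2: "(cnorm ip x)\<^sup>2 = Re (ip x x)"
  using ip_self_Re_nonneg[of x] by (simp add: cnorm_def)

lemma ip_self_eq_cnorm: "ip x x = complex_of_real ((cnorm ip x)\<^sup>2)"
  using ip_self_Im[of x] by (simp add: cnorm_power2 complex_eq_iff)

lemma cnorm_eq_0_iff [simp]: "cnorm ip x = 0 \<longleftrightarrow> x = 0"
  using ip_self_eq_cnorm[of x] ip_self_eq_0D[of x] by (auto simp: cnorm_def)

lemma cnorm_zero [simp]: "cnorm ip 0 = 0"
  by simp

lemma cnorm_scale: "cnorm ip (sc a x) = cmod a * cnorm ip x"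
proof -
  have "ip (sc a x) (sc a x) = (a * cnj a) * ip x x"
    by (simp add: ip_scale_left ip_scale_right)
  then have "Re (ip (sc a x) (sc a x)) = (cmod a)\<^sup>2 * Re (ip x x)"
    by (simp add: complex_norm_square[symmetric] ip_self_eq_cnorm[of x])
  then show ?thesis
    by (simp add: cnorm_def real_sqrt_mult)
qed

lemma cnorm_minus [simp]: "cnorm ip (- x) = cnorm ip x"
  using cnorm_scale[of "-1" x] by simp

lemma cnorm_minus_commute: "cnorm ip (x - y) = cnorm ip (y - x)"
  using cnorm_minus[of "x - y"] by simp

lemma cauchy_schwarz: "cmod (ip x y) \<le> cnorm ip x * cnorm ip y"
proof (cases "y = 0")
  case False
  define p where "p = (cnorm ip y)\<^sup>2"
  define a where "a = ip x y"
  have "p > 0"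
    using False by (simp add: p_def)
  have "ip y y = p"
    by (simp add: p_def ip_self_eq_cnorm)
  then have "ip (sc p x - sc a y) (sc p x - sc a y) = p * (p * ip x x - a * cnj a)"
    by (simp add: ip_diff_left ip_diff_right ip_scale_left ip_scale_right ip_cnj[of y x]
        a_def[symmetric] algebra_simps)
  also have "\<dots> = complex_of_real (p * (p * (cnorm ip x)\<^sup>2 - (cmod a)\<^sup>2))"
    by (simp add: ip_self_eq_cnorm[of x] complex_norm_square[symmetric])
  finally have "0 \<le> p * (p * (cnorm ip x)\<^sup>2 - (cmod a)\<^sup>2)"
    using ip_self_Re_nonneg[of "sc p x - sc a y"] by simp
  with \<open>p > 0\<close> have "(cmod a)\<^sup>2 \<le> (cnorm ip x * cnorm ip y)\<^sup>2"
    by (simp add: zero_le_mult_iff power_mult_distrib p_def mult.commute)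
  then show ?thesis
    unfolding a_def by (rule power2_le_imp_le) (simp add: cnorm_nonneg)
qed simp

lemma cnorm_triangle: "cnorm ip (x + y) \<le> cnorm ip x + cnorm ip y"
proof -
  have "(cnorm ip (x + y))\<^sup>2 = (cnorm ip x)\<^sup>2 + 2 * Re (ip x y) + (cnorm ip y)\<^sup>2"
    by (simp add: cnorm_power2 ip_add_left ip_add_right ip_cnj[of y x])
  also have "\<dots> \<le> (cnorm ip x + cnorm ip y)\<^sup>2"
    using cauchy_schwarz[of x y] complex_Re_le_cmod[of "ip x y"]
    by (simp add: power2_sum)
  finally show ?thesis
    by (rule power2_le_imp_le) (simp add: cnorm_nonneg)
qed

lemma cnorm_triangle_diff: "cnorm ip (x - y) \<le> cnorm ip (x - z) + cnorm ip (z - y)"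
  using cnorm_triangle[of "x - z" "z - y"] by simp

(* Also for u = 0, where the coefficient is 0 because of division by zero. *)
lemma ip_diff_projection_eq_0: "ip (y - sc (ip y u / ip u u) u) u = 0"
  using ip_self_eq_0D[of u] by (auto simp: ip_diff_left ip_scale_left)

lemma cnorm_pythagoras:
  "ip x y = 0 \<Longrightarrow> (cnorm ip (x + y))\<^sup>2 = (cnorm ip x)\<^sup>2 + (cnorm ip y)\<^sup>2"
  by (simp add: cnorm_power2 ip_add_left ip_add_right ip_cnj[of y x])

end

section \<open>Bounded extension from a dense subspace\<close>

lemma le_of_forall_pos_le_add_mult:
  fixes a b c :: real
  assumes "\<And>d. 0 < d \<Longrightarrow> a \<le> b + c * d"
  shows "a \<le> b"
proof (rule field_le_epsilon)
  fix e :: real assume "0 < e"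
  show "a \<le> b + e"
  proof (cases "c > 0")
    case True
    then show ?thesis using assms[of "e / c"] \<open>0 < e\<close> by simp
  next
    case False
    then show ?thesis using assms[of 1] \<open>0 < e\<close> by simp
  qed
qed

definition cnorm_dense :: "('a::ab_group_add \<Rightarrow> 'a \<Rightarrow> complex) \<Rightarrow> 'a set \<Rightarrow> bool" where
  "cnorm_dense ip S \<longleftrightarrow> (\<forall>w e. 0 < e \<longrightarrow> (\<exists>s\<in>S. cnorm ip (w - s) < e))"

context complex_inner
begin

lemma cnorm_triangle3: "cnorm ip (x + y + z) \<le> cnorm ip x + cnorm ip y + cnorm ip z"
  using cnorm_triangle[of "x + y" z] cnorm_triangle[of x y] by linarith

lemma le_of_dense_approx:
  assumes "cnorm_dense ip S" and "0 \<le> c"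
    and "\<And>s. s \<in> S \<Longrightarrow> a \<le> b + c * cnorm ip (w - s)"
  shows "a \<le> b"
proof (rule le_of_forall_pos_le_add_mult)
  fix d :: real assume "0 < d"
  then obtain s where "s \<in> S" "cnorm ip (w - s) < d"
    using assms(1) unfolding cnorm_dense_def by blast
  then show "a \<le> b + c * d"
    using assms(3)[of s] mult_left_mono[of "cnorm ip (w - s)" d c] assms(2) by linarith
qed

lemma bounded_op_module_hom: "bounded_op sc ip T \<Longrightarrow> module_hom sc sc T"
  unfolding bounded_op_def by (simp add: module_hom_linearI)

lemma bounded_op_nonneg_bound:
  assumes "bounded_op sc ip T"
  obtains M where "0 \<le> M" "\<And>x. cnorm ip (T x) \<le> M * cnorm ip x"
proof -
  obtain M where "\<And>x. cnorm ip (T x) \<le> M * cnorm ip x"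
    using assms unfolding bounded_op_def by blast
  then have "\<And>x. cnorm ip (T x) \<le> \<bar>M\<bar> * cnorm ip x"
    by (meson abs_ge_self cnorm_nonneg mult_right_mono order_trans)
  then show thesis
    by (intro that[of "\<bar>M\<bar>"]) auto
qed

lemma bounded_op_eq_on_dense:
  assumes "cnorm_dense ip S" and "bounded_op sc ip T1" and "bounded_op sc ip T2"
    and "\<And>s. s \<in> S \<Longrightarrow> T1 s = T2 s"
  shows "T1 = T2"
proof
  fix w
  interpret T1: module_hom sc sc T1 using assms(2) by (rule bounded_op_module_hom)
  interpret T2: module_hom sc sc T2 using assms(3) by (rule bounded_op_module_hom)
  obtain M1 where M1: "0 \<le> M1" "\<And>x. cnorm ip (T1 x) \<le> M1 * cnorm ip x"
    using assms(2) by (rule bounded_op_nonneg_bound) blast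
  obtain M2 where M2: "0 \<le> M2" "\<And>x. cnorm ip (T2 x) \<le> M2 * cnorm ip x"
    using assms(3) by (rule bounded_op_nonneg_bound) blast
  have "cnorm ip (T1 w - T2 w) \<le> 0"
  proof (rule le_of_dense_approx[OF assms(1)])
    fix s assume "s \<in> S"
    then have "T1 w - T2 w = T1 (w - s) - T2 (w - s)"
      by (simp add: T1.diff T2.diff assms(4))
    then have "cnorm ip (T1 w - T2 w) \<le> cnorm ip (T1 (w - s)) + cnorm ip (T2 (w - s))"
      using cnorm_triangle[of "T1 (w - s)" "- T2 (w - s)"] by simp
    then show "cnorm ip (T1 w - T2 w) \<le> 0 + (M1 + M2) * cnorm ip (w - s)"
      using M1(2)[of "w - s"] M2(2)[of "w - s"] distrib_right[of M1 M2 "cnorm ip (w - s)"]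
      by linarith
  qed (use M1 M2 in simp)
  then show "T1 w = T2 w"
    using cnorm_nonneg[of "T1 w - T2 w"] by simp
qed

end

locale complex_hilbert =
  fixes sc :: "complex \<Rightarrow> 'a::ab_group_add \<Rightarrow> 'a" and ip :: "'a \<Rightarrow> 'a \<Rightarrow> complex"
  assumes hilbert_space: "hilbert_space sc ip"

sublocale complex_hilbert \<subseteq> complex_inner
  using hilbert_space by unfold_locales (simp add: hilbert_space_def)

context complex_hilbert
begin

lemma complete:
  assumes "\<forall>e>0. \<exists>N. \<forall>m\<ge>N. \<forall>k\<ge>N. cnorm ip (X m - X k) < e"
  obtains l where "(\<lambda>k. cnorm ip (X k - l)) \<longlonglongrightarrow> 0"
  using hilbert_space assms unfolding hilbert_space_def by blast

end

locale bounded_on_dense_subspace = complex_hilbert +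
  fixes S :: "'a set" and T0 :: "'a \<Rightarrow> 'a" and M :: real
  assumes dense: "cnorm_dense ip S" and subspace: "subspace S"
    and T0_add: "s \<in> S \<Longrightarrow> t \<in> S \<Longrightarrow> T0 (s + t) = T0 s + T0 t"
    and T0_scale: "s \<in> S \<Longrightarrow> T0 (sc a s) = sc a (T0 s)"
    and T0_bound: "s \<in> S \<Longrightarrow> cnorm ip (T0 s) \<le> M * cnorm ip s"
    and M_nonneg: "0 \<le> M"
begin

lemma T0_lipschitz:
  assumes "s \<in> S" "t \<in> S"
  shows "cnorm ip (T0 s - T0 t) \<le> M * cnorm ip (s - t)"
proof -
  have "T0 s = T0 (s - t) + T0 t"
    using T0_add[of "s - t" t] assms subspace_diff[OF subspace] by simp
  then show ?thesis
    using T0_bound[of "s - t"] assms subspace_diff[OF subspace] by simp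
qed

lemma T0_zero: "T0 0 = 0"
  using T0_scale[of 0 0] subspace_0[OF subspace] by simp

(* T0 is M-Lipschitz on the dense set S; this characterizes the value l at w of its continuous
   extension without any limit process. *)
definition extension_value :: "'a \<Rightarrow> 'a \<Rightarrow> bool" where
  "extension_value w l \<longleftrightarrow> (\<forall>s\<in>S. cnorm ip (T0 s - l) \<le> M * cnorm ip (w - s))"

lemma extension_value_T0: "s \<in> S \<Longrightarrow> extension_value s (T0 s)"
  unfolding extension_value_def using T0_lipschitz cnorm_minus_commute by metis

lemma extension_value_unique:
  assumes "extension_value w l1" "extension_value w l2"
  shows "l1 = l2"
proof -
  have "cnorm ip (l1 - l2) \<le> 0"
  proof (rule le_of_dense_approx[OF dense])
    fix s assume "s \<in> S"
    then have "cnorm ip (T0 s - l1) \<le> M * cnorm ip (w - s)" "cnorm ip (T0 s - l2) \<le> M * cnorm ip (w - s)"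
      using assms unfolding extension_value_def by blast+
    then show "cnorm ip (l1 - l2) \<le> 0 + 2 * M * cnorm ip (w - s)"
      using cnorm_triangle_diff[of l1 l2 "T0 s"] cnorm_minus_commute[of l1 "T0 s"] by linarith
  qed (simp add: M_nonneg)
  then show ?thesis
    using cnorm_nonneg[of "l1 - l2"] by simp
qed

lemma T0_dist_le:
  assumes "s \<in> S" "t \<in> S"
  shows "cnorm ip (T0 s - T0 t) \<le> M * cnorm ip (w - s) + M * cnorm ip (w - t)"
proof -
  have "cnorm ip (s - t) \<le> cnorm ip (w - s) + cnorm ip (w - t)"
    using cnorm_triangle_diff[of s t w] cnorm_minus_commute[of s w] by linarith
  then show ?thesis
    using T0_lipschitz[OF assms] M_nonneg by (metis distrib_left mult_left_mono order_trans)
qed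

lemma T0_Cauchy:
  assumes "\<And>k. s k \<in> S" and "(\<lambda>k. cnorm ip (w - s k)) \<longlonglongrightarrow> 0"
  shows "\<forall>e>0. \<exists>N. \<forall>m\<ge>N. \<forall>k\<ge>N. cnorm ip (T0 (s m) - T0 (s k)) < e"
proof (intro allI impI)
  fix e :: real assume "0 < e"
  have "(\<lambda>k. M * cnorm ip (w - s k)) \<longlonglongrightarrow> 0"
    using tendsto_mult_right_zero[OF assms(2)] .
  then obtain N where N: "\<And>k. k \<ge> N \<Longrightarrow> M * cnorm ip (w - s k) < e / 2"
    using order_tendstoD(2)[of _ 0 sequentially "e / 2"] \<open>0 < e\<close>
    by (auto simp: eventually_sequentially)
  have "cnorm ip (T0 (s m) - T0 (s k)) < e" if "m \<ge> N" "k \<ge> N" for m k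
    using T0_dist_le[OF assms(1)[of m] assms(1)[of k], of w] N[OF that(1)] N[OF that(2)] by linarith
  then show "\<exists>N. \<forall>m\<ge>N. \<forall>k\<ge>N. cnorm ip (T0 (s m) - T0 (s k)) < e"
    by blast
qed

lemma extension_value_exists: "\<exists>l. extension_value w l"
proof -
  have "\<forall>k. \<exists>t\<in>S. cnorm ip (w - t) < 1 / real (Suc k)"
    using dense unfolding cnorm_dense_def by simp
  then obtain s where s: "\<And>k. s k \<in> S" "\<And>k. cnorm ip (w - s k) < 1 / real (Suc k)"
    by metis
  have s_lim: "(\<lambda>k. cnorm ip (w - s k)) \<longlonglongrightarrow> 0"
    by (rule LIMSEQ_norm_0) (use s(2) in \<open>simp add: cnorm_nonneg\<close>)
  obtain l where l: "(\<lambda>k. cnorm ip (T0 (s k) - l)) \<longlonglongrightarrow> 0"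
    using T0_Cauchy[OF s(1) s_lim] by (rule complete)
  have "cnorm ip (T0 t - l) \<le> M * cnorm ip (w - t)" if "t \<in> S" for t
  proof (rule LIMSEQ_le_const)
    show "(\<lambda>k. M * cnorm ip (w - t) + M * cnorm ip (w - s k) + cnorm ip (T0 (s k) - l))
        \<longlonglongrightarrow> M * cnorm ip (w - t)"
      using tendsto_add[OF tendsto_add[OF tendsto_const tendsto_mult_right_zero[OF s_lim]] l]
      by simp
    show "\<exists>N. \<forall>k\<ge>N. cnorm ip (T0 t - l)
        \<le> M * cnorm ip (w - t) + M * cnorm ip (w - s k) + cnorm ip (T0 (s k) - l)"
      using cnorm_triangle_diff[of "T0 t" l "T0 (s _)"] T0_dist_le[OF that s(1)]
      by (meson add_right_mono order_trans)
  qed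
  then show ?thesis
    unfolding extension_value_def by blast
qed

lemma extension_value_add:
  assumes "extension_value w1 l1" "extension_value w2 l2"
  shows "extension_value (w1 + w2) (l1 + l2)"
  unfolding extension_value_def
proof
  fix t assume "t \<in> S"
  show "cnorm ip (T0 t - (l1 + l2)) \<le> M * cnorm ip (w1 + w2 - t)"
  proof (rule le_of_forall_pos_le_add_mult)
    fix d :: real assume "0 < d"
    then obtain s1 s2 where s: "s1 \<in> S" "cnorm ip (w1 - s1) < d" "s2 \<in> S" "cnorm ip (w2 - s2) < d"
      using dense unfolding cnorm_dense_def by meson
    have "T0 t - (l1 + l2) = (T0 t - T0 (s1 + s2)) + (T0 s1 - l1) + (T0 s2 - l2)"
      using T0_add[OF s(1,3)] by simp
    then have "cnorm ip (T0 t - (l1 + l2))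
        \<le> cnorm ip (T0 t - T0 (s1 + s2)) + cnorm ip (T0 s1 - l1) + cnorm ip (T0 s2 - l2)"
      using cnorm_triangle3[of "T0 t - T0 (s1 + s2)" "T0 s1 - l1" "T0 s2 - l2"] by (simp only:)
    moreover have "cnorm ip (T0 s1 - l1) \<le> M * cnorm ip (w1 - s1)"
      "cnorm ip (T0 s2 - l2) \<le> M * cnorm ip (w2 - s2)"
      using assms s(1,3) unfolding extension_value_def by blast+
    ultimately have "cnorm ip (T0 t - (l1 + l2))
        \<le> M * cnorm ip (t - (s1 + s2)) + M * cnorm ip (w1 - s1) + M * cnorm ip (w2 - s2)"
      using T0_lipschitz[OF \<open>t \<in> S\<close> subspace_add[OF subspace s(1,3)]] by linarith
    moreover have "cnorm ip (t - (s1 + s2)) \<le> cnorm ip (w1 + w2 - t) + cnorm ip (w1 - s1) + cnorm ip (w2 - s2)"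
      using cnorm_triangle3[of "t - (w1 + w2)" "w1 - s1" "w2 - s2"] cnorm_minus_commute[of t "w1 + w2"]
      by (simp add: algebra_simps)
    then have "M * cnorm ip (t - (s1 + s2))
        \<le> M * cnorm ip (w1 + w2 - t) + M * cnorm ip (w1 - s1) + M * cnorm ip (w2 - s2)"
      by (metis mult_left_mono[OF _ M_nonneg] distrib_left)
    moreover have "M * cnorm ip (w1 - s1) \<le> M * d" "M * cnorm ip (w2 - s2) \<le> M * d"
      using s(2,4) M_nonneg by (simp_all add: mult_left_mono)
    ultimately show "cnorm ip (T0 t - (l1 + l2)) \<le> M * cnorm ip (w1 + w2 - t) + 4 * M * d"
      by linarith
  qed
qed

lemma extension_value_scale:
  assumes "extension_value w l"
  shows "extension_value (sc a w) (sc a l)"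
  unfolding extension_value_def
proof
  fix t assume "t \<in> S"
  show "cnorm ip (T0 t - sc a l) \<le> M * cnorm ip (sc a w - t)"
  proof (cases "a = 0")
    case True
    then show ?thesis
      using T0_bound[OF \<open>t \<in> S\<close>] cnorm_minus_commute[of 0 t] by simp
  next
    case False
    define t' where "t' = sc (inverse a) t"
    have "t' \<in> S" "t = sc a t'"
      using \<open>t \<in> S\<close> False subspace_scale[OF subspace] by (simp_all add: t'_def)
    then have "T0 t - sc a l = sc a (T0 t' - l)" "sc a w - t = sc a (w - t')"
      by (simp_all add: T0_scale scale_right_diff_distrib)
    moreover have "cnorm ip (T0 t' - l) \<le> M * cnorm ip (w - t')"
      using assms \<open>t' \<in> S\<close> unfolding extension_value_def by blast
    then have "cmod a * cnorm ip (T0 t' - l) \<le> cmod a * (M * cnorm ip (w - t'))"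
      by (rule mult_left_mono) simp
    ultimately show ?thesis
      by (simp add: cnorm_scale mult.left_commute)
  qed
qed

lemma extension_value_bound: "extension_value w l \<Longrightarrow> cnorm ip l \<le> M * cnorm ip w"
  unfolding extension_value_def using subspace_0[OF subspace] T0_zero by force

definition extension :: "'a \<Rightarrow> 'a" where
  "extension w = (THE l. extension_value w l)"

lemma extension_value_extension: "extension_value w (extension w)"
  unfolding extension_def
  using extension_value_exists extension_value_unique by (metis theI')

lemma extension_eq_T0: "s \<in> S \<Longrightarrow> extension s = T0 s"
  using extension_value_unique[OF extension_value_extension extension_value_T0] .

lemma bounded_op_extension: "bounded_op sc ip extension"
  unfolding bounded_op_def Vector_Spaces.linear_iff
  using extension_value_unique[OF extension_value_extension
      extension_value_add[OF extension_value_extension extension_value_extension]]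
    extension_value_unique[OF extension_value_extension
      extension_value_scale[OF extension_value_extension]]
    extension_value_bound[OF extension_value_extension] vector_space_axioms
  by blast

end

lemma (in complex_hilbert) bounded_op_extends:
  assumes "cnorm_dense ip S" "subspace S"
    and "\<And>s t. s \<in> S \<Longrightarrow> t \<in> S \<Longrightarrow> T0 (s + t) = T0 s + T0 t"
    and "\<And>s a. s \<in> S \<Longrightarrow> T0 (sc a s) = sc a (T0 s)"
    and "\<And>s. s \<in> S \<Longrightarrow> cnorm ip (T0 s) \<le> M * cnorm ip s" "0 \<le> M"
  obtains T where "bounded_op sc ip T" "\<And>s. s \<in> S \<Longrightarrow> T s = T0 s"
proof -
  interpret bounded_on_dense_subspace sc ip S T0 M
    by unfold_locales (use assms in auto)
  show thesis
    using that bounded_op_extension extension_eq_T0 by blast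
qed

section \<open>Hilbert tensor products\<close>

locale hilbert_tensor_space =
  fixes scF :: "complex \<Rightarrow> 'f::ab_group_add \<Rightarrow> 'f" and ipF :: "'f \<Rightarrow> 'f \<Rightarrow> complex"
    and scG :: "complex \<Rightarrow> 'g::ab_group_add \<Rightarrow> 'g" and ipG :: "'g \<Rightarrow> 'g \<Rightarrow> complex"
    and scW :: "complex \<Rightarrow> 'w::ab_group_add \<Rightarrow> 'w" and ipW :: "'w \<Rightarrow> 'w \<Rightarrow> complex"
    and tens :: "'f \<Rightarrow> 'g \<Rightarrow> 'w"
  assumes hilbert_tensor: "hilbert_tensor scF ipF scG ipG scW ipW tens"

sublocale hilbert_tensor_space \<subseteq> F: complex_hilbert scF ipF
  using hilbert_tensor by unfold_locales (simp add: hilbert_tensor_def)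

sublocale hilbert_tensor_space \<subseteq> G: complex_hilbert scG ipG
  using hilbert_tensor by unfold_locales (simp add: hilbert_tensor_def)

sublocale hilbert_tensor_space \<subseteq> W: complex_hilbert scW ipW
  using hilbert_tensor by unfold_locales (simp add: hilbert_tensor_def)

context hilbert_tensor_space
begin

lemma module_hom_tens_left: "module_hom scF scW (\<lambda>x. tens x y)"
  and module_hom_tens_right: "module_hom scG scW (tens x)"
  using hilbert_tensor unfolding hilbert_tensor_def by (simp_all add: module_hom_linearI)

lemmas tens_add_left = module_hom.add[OF module_hom_tens_left]
  and tens_scale_left = module_hom.scale[OF module_hom_tens_left]
  and tens_minus_left = module_hom.neg[OF module_hom_tens_left]
  and tens_zero_left [simp] = module_hom.zero[OF module_hom_tens_left]
  and tens_add_right = module_hom.add[OF module_hom_tens_right]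
  and tens_scale_right = module_hom.scale[OF module_hom_tens_right]
  and tens_diff_right = module_hom.diff[OF module_hom_tens_right]
  and tens_zero_right [simp] = module_hom.zero[OF module_hom_tens_right]

lemma ip_tens: "ipW (tens x y) (tens x' y') = ipF x x' * ipG y y'"
  using hilbert_tensor by (simp add: hilbert_tensor_def)

lemma cnorm_tens: "cnorm ipW (tens x y) = cnorm ipF x * cnorm ipG y"
proof -
  have "complex_of_real ((cnorm ipW (tens x y))\<^sup>2) = complex_of_real ((cnorm ipF x * cnorm ipG y)\<^sup>2)"
    by (simp only: W.ip_self_eq_cnorm[symmetric] ip_tens F.ip_self_eq_cnorm[of x]
        G.ip_self_eq_cnorm[of y] power_mult_distrib of_real_mult)
  then have "(cnorm ipW (tens x y))\<^sup>2 = (cnorm ipF x * cnorm ipG y)\<^sup>2"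
    by (simp only: of_real_eq_iff)
  then show ?thesis
    by (rule power2_eq_imp_eq) (simp_all add: W.cnorm_nonneg F.cnorm_nonneg G.cnorm_nonneg)
qed

definition tensor_sum :: "('f \<times> 'g) list \<Rightarrow> 'w" where
  "tensor_sum L = (\<Sum>(x, y)\<leftarrow>L. tens x y)"

lemma tensor_sum_Nil [simp]: "tensor_sum [] = 0"
  and tensor_sum_Cons [simp]: "tensor_sum ((x, y) # L) = tens x y + tensor_sum L"
  and tensor_sum_append [simp]: "tensor_sum (L1 @ L2) = tensor_sum L1 + tensor_sum L2"
  by (simp_all add: tensor_sum_def)

lemma tensor_sum_apfst_scale: "tensor_sum (map (apfst (scF a)) L) = scW a (tensor_sum L)"
  by (induction L) (auto simp: tens_scale_left W.scale_right_distrib)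

lemma tensor_sum_apfst_uminus: "tensor_sum (map (apfst uminus) L) = - tensor_sum L"
  by (induction L) (auto simp: tens_minus_left)

lemma cnorm_dense_tensor_sums: "cnorm_dense ipW (range tensor_sum)"
  unfolding cnorm_dense_def
proof (intro allI impI)
  fix w and e :: real assume "0 < e"
  then obtain p xs ys where "cnorm ipW (w - (\<Sum>k<(p::nat). tens (xs k) (ys k))) < e"
    using hilbert_tensor unfolding hilbert_tensor_def by blast
  moreover have "(\<Sum>k<p. tens (xs k) (ys k)) = tensor_sum (map (\<lambda>k. (xs k, ys k)) [0..<p])"
    unfolding tensor_sum_def map_map o_def prod.case
    using sum.distinct_set_conv_list[OF distinct_upt, of "\<lambda>k. tens (xs k) (ys k)" 0 p]
    by (simp add: atLeast0LessThan)
  ultimately show "\<exists>s\<in>range tensor_sum. cnorm ipW (w - s) < e"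
    by (metis rangeI)
qed

lemma subspace_tensor_sums: "W.subspace (range tensor_sum)"
  unfolding W.subspace_def
proof (intro conjI ballI allI)
  show "0 \<in> range tensor_sum"
    using rangeI[of tensor_sum "[]"] by simp
  fix s t assume "s \<in> range tensor_sum" "t \<in> range tensor_sum"
  then obtain L1 L2 where "s = tensor_sum L1" "t = tensor_sum L2"
    by blast
  then show "s + t \<in> range tensor_sum"
    using rangeI[of tensor_sum "L1 @ L2"] by simp
next
  fix a s assume "s \<in> range tensor_sum"
  then obtain L where "s = tensor_sum L"
    by blast
  then show "scW a s \<in> range tensor_sum"
    using rangeI[of tensor_sum "map (apfst (scF a)) L"] by (simp add: tensor_sum_apfst_scale)
qed

lemma tensor_sum_apfst_split_off:
  assumes "module_hom scF scF Q"
  shows "tensor_sum (map (apfst Q) L)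
    = tensor_sum (map (apfst Q) (map (apsnd (\<lambda>y. y - scG (c y) y0)) L))
      + tens (Q (\<Sum>(x, y)\<leftarrow>L. scF (c y) x)) y0"
proof -
  interpret Q: module_hom scF scF Q by fact
  show ?thesis
    by (induction L)
      (auto simp: Q.add Q.scale tens_add_left tens_diff_right tens_scale_left tens_scale_right)
qed

lemma ip_tensor_sum_tens_eq_0:
  "\<forall>(x, y) \<in> set L. ipG y y0 = 0 \<Longrightarrow> ipW (tensor_sum L) (tens z y0) = 0"
  by (induction L) (auto simp: W.ip_add_left ip_tens)

lemma cnorm_tensor_sum_apfst_le:
  assumes Q: "module_hom scF scF Q" and Q_bound: "\<And>x. cnorm ipF (Q x) \<le> M * cnorm ipF x"
    and "0 \<le> M"
  shows "cnorm ipW (tensor_sum (map (apfst Q) L)) \<le> M * cnorm ipW (tensor_sum L)"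
proof -
  interpret Q: module_hom scF scF Q by (rule Q)
  have "(cnorm ipW (tensor_sum (map (apfst Q) L)))\<^sup>2 \<le> (M * cnorm ipW (tensor_sum L))\<^sup>2"
  proof (induction "length L" arbitrary: L)
    case 0
    then show ?case by simp
  next
    case (Suc n)
    then obtain x0 y0 L' where L: "L = (x0, y0) # L'" and n: "length L' = n"
      by (metis length_Suc_conv prod.collapse)
    (* Gram-Schmidt step: make every right factor of L' orthogonal to y0; the removed parts
       collect into the single tensor z \<otimes> y0, which is orthogonal to the rest. *)
    define P :: "'f \<times> 'g \<Rightarrow> 'f \<times> 'g"
      where "P = apsnd (\<lambda>y. y - scG (ipG y y0 / ipG y0 y0) y0)"
    define z where "z = x0 + (\<Sum>(x, y)\<leftarrow>L'. scF (ipG y y0 / ipG y0 y0) x)"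
    have split:
      "tensor_sum (map (apfst Q') L) = tensor_sum (map (apfst Q') (map P L')) + tens (Q' z) y0"
      if "module_hom scF scF Q'" for Q'
      using tensor_sum_apfst_split_off[OF that, of L' "\<lambda>y. ipG y y0 / ipG y0 y0" y0]
        module_hom.add[OF that]
      by (simp add: L P_def z_def tens_add_left)
    have split_id: "tensor_sum L = tensor_sum (map P L') + tens z y0"
      using split[OF module_hom_linearI[OF F.module_hom_id]] by (simp add: apfst_id)
    have orth: "\<forall>(x, y) \<in> set (map P L'). ipG y y0 = 0"
      "\<forall>(x, y) \<in> set (map (apfst Q) (map P L')). ipG y y0 = 0"
      by (auto simp: P_def G.ip_diff_projection_eq_0)
    have "(cnorm ipF (Q z) * cnorm ipG y0)\<^sup>2 \<le> (M * (cnorm ipF z * cnorm ipG y0))\<^sup>2"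
      using mult_right_mono[OF Q_bound G.cnorm_nonneg] F.cnorm_nonneg G.cnorm_nonneg
      by (intro power_mono) (simp_all add: mult.assoc)
    moreover have "(cnorm ipW (tensor_sum (map (apfst Q) (map P L'))))\<^sup>2
        \<le> (M * cnorm ipW (tensor_sum (map P L')))\<^sup>2"
      using Suc(1)[of "map P L'"] n by simp
    ultimately show ?case
      unfolding split[OF Q] split_id
      by (simp add: W.cnorm_pythagoras ip_tensor_sum_tens_eq_0 orth cnorm_tens
          power_mult_distrib distrib_left)
  qed
  then show ?thesis
    by (rule power2_le_imp_le) (simp add: \<open>0 \<le> M\<close> W.cnorm_nonneg)
qed

lemma hilbert_tensor_space_swap: "hilbert_tensor_space scG ipG scF ipF scW ipW (\<lambda>y x. tens x y)"
proof
  have dense: "\<forall>w e. 0 < e \<longrightarrow> (\<exists>p xs ys. cnorm ipW (w - (\<Sum>k<(p::nat). tens (xs k) (ys k))) < e)"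
    using hilbert_tensor unfolding hilbert_tensor_def by (elim conjE) assumption
  show "hilbert_tensor scG ipG scF ipF scW ipW (\<lambda>y x. tens x y)"
    unfolding hilbert_tensor_def
  proof (intro conjI allI impI)
    show "hilbert_space scG ipG" "hilbert_space scF ipF" "hilbert_space scW ipW"
      by (fact G.hilbert_space F.hilbert_space W.hilbert_space)+
    show "Vector_Spaces.linear scG scW (\<lambda>y. tens x y)" for x
      using module_hom_tens_right by (rule linear_module_homI)
    show "Vector_Spaces.linear scF scW (\<lambda>x. tens x y)" for y
      using module_hom_tens_left by (rule linear_module_homI)
    show "ipW (tens x y) (tens x' y') = ipG y y' * ipF x x'" for x y x' y'
      by (simp add: ip_tens mult.commute)
    fix w and e :: real assume "0 < e"
    then obtain p xs ys where "cnorm ipW (w - (\<Sum>k<(p::nat). tens (xs k) (ys k))) < e"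
      using dense by blast
    then show "\<exists>p ys xs. cnorm ipW (w - (\<Sum>k<(p::nat). tens (xs k) (ys k))) < e"
      by blast
  qed
qed

lemma cnorm_tensor_sum_apsnd_le:
  assumes "module_hom scG scG R" and "\<And>y. cnorm ipG (R y) \<le> M * cnorm ipG y" and "0 \<le> M"
  shows "cnorm ipW (tensor_sum (map (apsnd R) L)) \<le> M * cnorm ipW (tensor_sum L)"
proof -
  interpret swap: hilbert_tensor_space scG ipG scF ipF scW ipW "\<lambda>y x. tens x y"
    by (rule hilbert_tensor_space_swap)
  have swap_sum: "swap.tensor_sum (map prod.swap K) = tensor_sum K" for K
    by (induction K) auto
  have "map (apfst R) (map prod.swap L) = map prod.swap (map (apsnd R) L)"
    by (induction L) auto
  then show ?thesis
    using swap.cnorm_tensor_sum_apfst_le[OF assms, of "map prod.swap L"] by (simp only: swap_sum)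
qed

lemma cnorm_tensor_sum_map_prod_le:
  assumes "module_hom scF scF Q" and "\<And>x. cnorm ipF (Q x) \<le> MQ * cnorm ipF x" and "0 \<le> MQ"
    and "module_hom scG scG R" and "\<And>y. cnorm ipG (R y) \<le> MR * cnorm ipG y" and "0 \<le> MR"
  shows "cnorm ipW (tensor_sum (map (map_prod Q R) L)) \<le> MQ * MR * cnorm ipW (tensor_sum L)"
proof -
  have "map (map_prod Q R) L = map (apfst Q) (map (apsnd R) L)"
    by (induction L) auto
  then have "cnorm ipW (tensor_sum (map (map_prod Q R) L)) \<le> MQ * cnorm ipW (tensor_sum (map (apsnd R) L))"
    using cnorm_tensor_sum_apfst_le[OF assms(1-3)] by (simp only:)
  also have "\<dots> \<le> MQ * (MR * cnorm ipW (tensor_sum L))"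
    using cnorm_tensor_sum_apsnd_le[OF assms(4-6)] \<open>0 \<le> MQ\<close> by (rule mult_left_mono)
  finally show ?thesis
    by (simp add: mult.assoc)
qed

lemma tensor_sum_map_prod_bound:
  assumes "bounded_op scF ipF Q" and "bounded_op scG ipG R"
  obtains M where "0 \<le> M"
    and "\<And>L. cnorm ipW (tensor_sum (map (map_prod Q R) L)) \<le> M * cnorm ipW (tensor_sum L)"
proof -
  obtain MQ where MQ: "0 \<le> MQ" "\<And>x. cnorm ipF (Q x) \<le> MQ * cnorm ipF x"
    using assms(1) by (rule F.bounded_op_nonneg_bound) blast
  obtain MR where MR: "0 \<le> MR" "\<And>y. cnorm ipG (R y) \<le> MR * cnorm ipG y"
    using assms(2) by (rule G.bounded_op_nonneg_bound) blast
  show thesis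
    using that[of "MQ * MR"] MQ(1) MR(1)
      cnorm_tensor_sum_map_prod_le[OF F.bounded_op_module_hom[OF assms(1)] MQ(2,1)
        G.bounded_op_module_hom[OF assms(2)] MR(2,1)]
    by simp
qed

lemma tensor_sum_map_prod_cong:
  assumes "bounded_op scF ipF Q" and "bounded_op scG ipG R"
    and "tensor_sum L1 = tensor_sum L2"
  shows "tensor_sum (map (map_prod Q R) L1) = tensor_sum (map (map_prod Q R) L2)"
proof -
  interpret Q: module_hom scF scF Q using assms(1) by (rule F.bounded_op_module_hom)
  obtain M where M: "\<And>L. cnorm ipW (tensor_sum (map (map_prod Q R) L)) \<le> M * cnorm ipW (tensor_sum L)"
    using assms(1,2) by (rule tensor_sum_map_prod_bound) blast
  define L where "L = L1 @ map (apfst uminus) L2"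
  have "map (map_prod Q R) (map (apfst uminus) L2) = map (apfst uminus) (map (map_prod Q R) L2)"
    by (induction L2) (auto simp: Q.neg)
  then have "tensor_sum (map (map_prod Q R) L)
      = tensor_sum (map (map_prod Q R) L1) - tensor_sum (map (map_prod Q R) L2)"
    by (simp only: L_def map_append tensor_sum_append tensor_sum_apfst_uminus diff_conv_add_uminus)
  moreover have "tensor_sum L = 0"
    by (simp add: L_def tensor_sum_apfst_uminus assms(3))
  ultimately have
    "cnorm ipW (tensor_sum (map (map_prod Q R) L1) - tensor_sum (map (map_prod Q R) L2)) \<le> 0"
    using M[of L] by simp
  then show ?thesis
    using W.cnorm_nonneg[of "tensor_sum (map (map_prod Q R) L1) - tensor_sum (map (map_prod Q R) L2)"]
    by simp
qed

lemma bounded_op_tensor_sum: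
  assumes "bounded_op scW ipW T" and "\<And>x y. T (tens x y) = tens (Q x) (R y)"
  shows "T (tensor_sum L) = tensor_sum (map (map_prod Q R) L)"
proof -
  interpret T: module_hom scW scW T using assms(1) by (rule W.bounded_op_module_hom)
  show ?thesis
    by (induction L) (auto simp: T.add assms(2))
qed

lemma ex_tensor_op:
  assumes "bounded_op scF ipF Q" and "bounded_op scG ipG R"
  obtains T where "bounded_op scW ipW T" and "\<And>x y. T (tens x y) = tens (Q x) (R y)"
proof -
  interpret Q: module_hom scF scF Q using assms(1) by (rule F.bounded_op_module_hom)
  obtain M where M: "0 \<le> M"
    "\<And>L. cnorm ipW (tensor_sum (map (map_prod Q R) L)) \<le> M * cnorm ipW (tensor_sum L)"
    using assms by (rule tensor_sum_map_prod_bound) blast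
  (* SOME picks an arbitrary representation of w as a sum of elementary tensors; by
     tensor_sum_map_prod_cong the value on range tensor_sum does not depend on that choice. *)
  define T0 where "T0 w = tensor_sum (map (map_prod Q R) (SOME L. tensor_sum L = w))" for w
  have T0: "T0 (tensor_sum L) = tensor_sum (map (map_prod Q R) L)" for L
    unfolding T0_def by (rule tensor_sum_map_prod_cong[OF assms someI]) (rule refl)
  obtain T where T: "bounded_op scW ipW T" "\<And>s. s \<in> range tensor_sum \<Longrightarrow> T s = T0 s"
  proof (rule W.bounded_op_extends[OF cnorm_dense_tensor_sums subspace_tensor_sums _ _ _ M(1)])
    show "T0 (s + t) = T0 s + T0 t" if "s \<in> range tensor_sum" "t \<in> range tensor_sum" for s t
      using that by (auto simp: T0 simp flip: tensor_sum_append)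
    have "map (map_prod Q R) (map (apfst (scF a)) L) = map (apfst (scF a)) (map (map_prod Q R) L)"
      for a L by (induction L) (auto simp: Q.scale)
    then have "T0 (scW a (tensor_sum L)) = scW a (T0 (tensor_sum L))" for a L
      by (simp only: T0 tensor_sum_apfst_scale[symmetric])
    then show "T0 (scW a s) = scW a (T0 s)" if "s \<in> range tensor_sum" for a s
      using that by blast
    show "cnorm ipW (T0 s) \<le> M * cnorm ipW s" if "s \<in> range tensor_sum" for s
      using that M(2) by (auto simp: T0)
  qed blast
  moreover have "T (tens x y) = tens (Q x) (R y)" for x y
    using T(2)[OF rangeI[of tensor_sum "[(x, y)]"]] T0[of "[(x, y)]"] by simp
  ultimately show thesis
    using that by blast
qed

lemma tensor_op_tens:
  assumes "bounded_op scF ipF Q" and "bounded_op scG ipG R"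
  shows "tensor_op scW ipW tens Q R (tens x y) = tens (Q x) (R y)"
proof -
  obtain T where T: "bounded_op scW ipW T" "\<And>x y. T (tens x y) = tens (Q x) (R y)"
    using ex_tensor_op[OF assms] by blast
  have "tensor_op scW ipW tens Q R = T"
    unfolding tensor_op_def
  proof (rule the_equality)
    fix T' assume T': "bounded_op scW ipW T' \<and> (\<forall>x y. T' (tens x y) = tens (Q x) (R y))"
    then have "T' (tensor_sum L) = T (tensor_sum L)" for L
      using T bounded_op_tensor_sum[of T Q R] bounded_op_tensor_sum[of T' Q R] by simp
    then show "T' = T"
      using W.bounded_op_eq_on_dense[OF cnorm_dense_tensor_sums, of T' T] T(1) T' by blast
  qed (use T in blast)
  then show ?thesis
    by (simp add: T(2))
qed

end

section \<open>Controlled frames\<close>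

lemma sums_in_map:
  fixes f :: "'a::ab_group_add \<Rightarrow> 'b::ab_group_add"
  assumes add: "\<And>x y. f (x + y) = f x + f y"
    and bound: "\<And>x. nB (f x) \<le> M * nA x" and nonneg: "\<And>x. 0 \<le> nB x"
    and "sums_in nA a s"
  shows "sums_in nB (\<lambda>i. f (a i)) (f s)"
proof -
  interpret additive f by standard (rule add)
  have partial_sum: "(\<Sum>i<N. f (a i)) - f s = f ((\<Sum>i<N. a i) - s)" for N
    by (simp add: sum diff)
  have "(\<lambda>N. M * nA ((\<Sum>i<N. a i) - s)) \<longlonglongrightarrow> 0"
    using tendsto_mult_right_zero assms(4) unfolding sums_in_def by blast
  then show ?thesis
    unfolding sums_in_def partial_sum
    by (rule tendsto_sandwich[rotated 2, OF tendsto_const]) (simp_all add: nonneg bound)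
qed

context complex_inner
begin

lemma sums_in_bounded_op:
  assumes "bounded_op sc ip T" and "sums_in (cnorm ip) a s"
  shows "sums_in (cnorm ip) (\<lambda>i. T (a i)) (T s)"
proof -
  obtain M where "\<And>x. cnorm ip (T x) \<le> M * cnorm ip x"
    using assms(1) unfolding bounded_op_def by blast
  with module_hom.add[OF bounded_op_module_hom[OF assms(1)]] show ?thesis
    using cnorm_nonneg assms(2) by (rule sums_in_map[where nA = "cnorm ip" and nB = "cnorm ip"])
qed

lemma unitary_op_adjoint:
  assumes "unitary_op sc ip U"
  obtains U' where "\<And>x y. ip x (U y) = ip (U' x) y" and "\<And>x. cnorm ip (U' x) = cnorm ip x"
    and "\<And>x. U (U' x) = x"
proof -
  obtain U' where adj: "\<And>x y. ip (U x) y = ip x (U' y)" and right_inv: "\<And>x. U (U' x) = x"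
    using assms unfolding unitary_op_def by blast
  have adj': "ip x (U y) = ip (U' x) y" for x y
    using adj[of y x] ip_cnj[of x "U y"] ip_cnj[of y "U' x"] by simp
  have "cnorm ip (U' x) = cnorm ip x" for x
    using adj'[of x "U' x"] right_inv[of x] by (simp add: cnorm_def)
  with adj' right_inv show thesis
    using that by blast
qed

lemma ctrl_frame_unitary_image:
  assumes "unitary_op sc ip U" and C_U: "\<And>x. C (U x) = U (C x)" and "ctrl_frame ip C phi"
  shows "ctrl_frame ip C (\<lambda>i. U (phi i))"
proof -
  obtain U' where adj: "\<And>x y. ip x (U y) = ip (U' x) y"
    and isometric: "\<And>x. cnorm ip (U' x) = cnorm ip x"
    using assms(1) by (rule unitary_op_adjoint) blast
  obtain A B where "0 < A" "A \<le> B" and frame: "\<And>f. \<exists>s.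
      (\<lambda>i. ip f (phi i) * ip (C (phi i)) f) sums s \<and> Im s = 0 \<and>
      A * (cnorm ip f)\<^sup>2 \<le> Re s \<and> Re s \<le> B * (cnorm ip f)\<^sup>2"
    using assms(3) unfolding ctrl_frame_def by blast
  have "ip f (U (phi i)) * ip (C (U (phi i))) f = ip (U' f) (phi i) * ip (C (phi i)) (U' f)" for f i
    using adj[of f "C (phi i)"] ip_cnj[of "U (C (phi i))" f] ip_cnj[of "C (phi i)" "U' f"]
    by (simp add: adj C_U)
  then have "\<exists>s. (\<lambda>i. ip f (U (phi i)) * ip (C (U (phi i))) f) sums s \<and> Im s = 0 \<and>
      A * (cnorm ip f)\<^sup>2 \<le> Re s \<and> Re s \<le> B * (cnorm ip f)\<^sup>2" for f
    using frame[of "U' f"] by (simp only: isometric)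
  with \<open>0 < A\<close> \<open>A \<le> B\<close> show ?thesis
    unfolding ctrl_frame_def by blast
qed

lemma dual_ctrl_frames_unitary_image:
  assumes "unitary_op sc ip U" and C_U: "\<And>x. C (U x) = U (C x)"
    and "dual_ctrl_frames sc ip C phi psi"
  shows "dual_ctrl_frames sc ip C (\<lambda>i. U (phi i)) (\<lambda>i. U (psi i))"
proof -
  obtain U' where adj: "\<And>x y. ip x (U y) = ip (U' x) y" and right_inv: "\<And>x. U (U' x) = x"
    using assms(1) by (rule unitary_op_adjoint) blast
  have U: "bounded_op sc ip U"
    using assms(1) unfolding unitary_op_def by blast
  interpret U: module_hom sc sc U using U by (rule bounded_op_module_hom)
  have "sums_in (cnorm ip) (\<lambda>i. sc (ip f (U (psi i))) (C (U (phi i)))) f" for f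
    using sums_in_bounded_op[OF U, of "\<lambda>i. sc (ip (U' f) (psi i)) (C (phi i))" "U' f"] assms(3)
    unfolding dual_ctrl_frames_def by (simp add: adj C_U U.scale right_inv)
  then show ?thesis
    using assms(3) ctrl_frame_unitary_image[where U = U and C = C, OF assms(1) C_U]
    unfolding dual_ctrl_frames_def by blast
qed

end

context hilbert_tensor_space
begin

lemma ctrl_frame2_tensor:
  assumes T: "\<And>x y. T (tens x y) = tens (CF x) (CG y)"
    and "ctrl_frame ipF CF phi" and "ctrl_frame ipG CG psi"
  shows "ctrl_frame2 ipW tens T (\<lambda>i j. tens (phi i) (psi j))"
proof -
  obtain A1 B1 where AB1: "0 < A1" "A1 \<le> B1" and frame1: "\<And>f. \<exists>s.
      (\<lambda>i. ipF f (phi i) * ipF (CF (phi i)) f) sums s \<and> Im s = 0 \<and>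
      A1 * (cnorm ipF f)\<^sup>2 \<le> Re s \<and> Re s \<le> B1 * (cnorm ipF f)\<^sup>2"
    using assms(2) unfolding ctrl_frame_def by blast
  obtain A2 B2 where AB2: "0 < A2" "A2 \<le> B2" and frame2: "\<And>g. \<exists>s.
      (\<lambda>j. ipG g (psi j) * ipG (CG (psi j)) g) sums s \<and> Im s = 0 \<and>
      A2 * (cnorm ipG g)\<^sup>2 \<le> Re s \<and> Re s \<le> B2 * (cnorm ipG g)\<^sup>2"
    using assms(3) unfolding ctrl_frame_def by blast
  have "\<exists>r s. (\<forall>i. (\<lambda>j. ipW (tens f g) (tens (phi i) (psi j))
          * ipW (T (tens (phi i) (psi j))) (tens f g)) sums r i) \<and> r sums s \<and> Im s = 0 \<and>
        A1 * A2 * (cnorm ipW (tens f g))\<^sup>2 \<le> Re s \<and> Re s \<le> B1 * B2 * (cnorm ipW (tens f g))\<^sup>2"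
    for f g
  proof -
    have nonneg: "0 \<le> A1 * (cnorm ipF f)\<^sup>2" "0 \<le> A2 * (cnorm ipG g)\<^sup>2"
      "0 \<le> B1 * (cnorm ipF f)\<^sup>2"
      using AB1 AB2 by simp_all
    define a where "a i = ipF f (phi i) * ipF (CF (phi i)) f" for i
    define b where "b j = ipG g (psi j) * ipG (CG (psi j)) g" for j
    obtain s1 where s1: "a sums s1" "Im s1 = 0"
      "A1 * (cnorm ipF f)\<^sup>2 \<le> Re s1" "Re s1 \<le> B1 * (cnorm ipF f)\<^sup>2"
      using frame1[of f] unfolding a_def by blast
    obtain s2 where s2: "b sums s2" "Im s2 = 0"
      "A2 * (cnorm ipG g)\<^sup>2 \<le> Re s2" "Re s2 \<le> B2 * (cnorm ipG g)\<^sup>2"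
      using frame2[of g] unfolding b_def by blast
    have "ipW (tens f g) (tens (phi i) (psi j)) * ipW (T (tens (phi i) (psi j))) (tens f g)
        = a i * b j" for i j
      by (simp add: T ip_tens a_def b_def mult_ac)
    then have "\<forall>i. (\<lambda>j. ipW (tens f g) (tens (phi i) (psi j))
        * ipW (T (tens (phi i) (psi j))) (tens f g)) sums (a i * s2)"
      by (simp add: sums_mult[OF s2(1)])
    moreover have "(\<lambda>i. a i * s2) sums (s1 * s2)"
      using sums_mult2[OF s1(1)] .
    moreover have "(A1 * (cnorm ipF f)\<^sup>2) * (A2 * (cnorm ipG g)\<^sup>2) \<le> Re s1 * Re s2"
      using mult_mono[OF s1(3) s2(3) order_trans[OF nonneg(1) s1(3)] nonneg(2)] .
    moreover have "Re s1 * Re s2 \<le> (B1 * (cnorm ipF f)\<^sup>2) * (B2 * (cnorm ipG g)\<^sup>2)"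
      using mult_mono[OF s1(4) s2(4) nonneg(3) order_trans[OF nonneg(2) s2(3)]] .
    ultimately show ?thesis
      using s1(2) s2(2) by (intro exI[of _ "\<lambda>i. a i * s2"] exI[of _ "s1 * s2"])
        (simp add: cnorm_tens power_mult_distrib mult_ac)
  qed
  moreover have "0 < A1 * A2" "A1 * A2 \<le> B1 * B2"
    using AB1 AB2 by (simp_all add: mult_mono)
  ultimately show ?thesis
    unfolding ctrl_frame2_def by blast
qed

lemma sums_in_tens_left:
  "sums_in (cnorm ipF) a s \<Longrightarrow> sums_in (cnorm ipW) (\<lambda>i. tens (a i) y) (tens s y)"
  by (rule sums_in_map[where M = "cnorm ipG y"])
    (simp_all add: tens_add_left cnorm_tens W.cnorm_nonneg mult.commute)

lemma sums_in_tens_right: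
  "sums_in (cnorm ipG) b s \<Longrightarrow> sums_in (cnorm ipW) (\<lambda>j. tens x (b j)) (tens x s)"
  by (rule sums_in_map[where M = "cnorm ipF x"])
    (simp_all add: tens_add_right cnorm_tens W.cnorm_nonneg)

lemma dual_ctrl_frames2_tensor:
  assumes T: "\<And>x y. T (tens x y) = tens (CF x) (CG y)"
    and dual1: "dual_ctrl_frames scF ipF CF phi psi"
    and dual2: "dual_ctrl_frames scG ipG CG phi' psi'"
  shows "dual_ctrl_frames2 scW ipW tens T
    (\<lambda>i j. tens (phi i) (phi' j)) (\<lambda>i j. tens (psi i) (psi' j))"
proof -
  have "\<exists>r. (\<forall>i. sums_in (cnorm ipW)
        (\<lambda>j. scW (ipW (tens f g) (tens (psi i) (psi' j))) (T (tens (phi i) (phi' j)))) (r i)) \<and>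
      sums_in (cnorm ipW) r (tens f g)" for f g
  proof (intro exI conjI allI)
    define x where "x i = scF (ipF f (psi i)) (CF (phi i))" for i
    have summand: "scW (ipW (tens f g) (tens (psi i) (psi' j))) (T (tens (phi i) (phi' j)))
        = tens (x i) (scG (ipG g (psi' j)) (CG (phi' j)))" for i j
      by (simp add: T ip_tens x_def tens_scale_left tens_scale_right)
    show "sums_in (cnorm ipW)
        (\<lambda>j. scW (ipW (tens f g) (tens (psi i) (psi' j))) (T (tens (phi i) (phi' j)))) (tens (x i) g)"
      for i
      unfolding summand
      by (rule sums_in_tens_right) (use dual2 in \<open>simp add: dual_ctrl_frames_def\<close>)
    show "sums_in (cnorm ipW) (\<lambda>i. tens (x i) g) (tens f g)"
      using dual1 sums_in_tens_left unfolding dual_ctrl_frames_def x_def by blast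
  qed
  with dual1 dual2 show ?thesis
    unfolding dual_ctrl_frames2_def dual_ctrl_frames_def
    using ctrl_frame2_tensor[where T = T, OF T] by blast
qed

end

theorem theorem4p12:
  fixes n :: nat
    and scH :: "complex \<Rightarrow> 'h::ab_group_add \<Rightarrow> 'h" and nipH :: "'h \<Rightarrow> 'h \<Rightarrow> 'h list \<Rightarrow> complex"
    and scK :: "complex \<Rightarrow> 'k::ab_group_add \<Rightarrow> 'k" and nipK :: "'k \<Rightarrow> 'k \<Rightarrow> 'k list \<Rightarrow> complex"
    and as :: "'h list" and bs :: "'k list"
    and scF :: "complex \<Rightarrow> 'hf::ab_group_add \<Rightarrow> 'hf" and ipF :: "'hf \<Rightarrow> 'hf \<Rightarrow> complex"
    and qH :: "'h \<Rightarrow> 'hf"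
    and scG :: "complex \<Rightarrow> 'kg::ab_group_add \<Rightarrow> 'kg" and ipG :: "'kg \<Rightarrow> 'kg \<Rightarrow> complex"
    and qK :: "'k \<Rightarrow> 'kg"
    and scW :: "complex \<Rightarrow> 'w::ab_group_add \<Rightarrow> 'w" and ipW :: "'w \<Rightarrow> 'w \<Rightarrow> complex"
    and tens :: "'hf \<Rightarrow> 'kg \<Rightarrow> 'w"
    and C1 U :: "'hf \<Rightarrow> 'hf" and C2 V :: "'kg \<Rightarrow> 'kg"
    and fs es :: "nat \<Rightarrow> 'h" and gs hs :: "nat \<Rightarrow> 'k"
  assumes "n \<ge> 2"
    and "n_hilbert_space n scH nipH" and "n_hilbert_space n scK nipK"
    and "length as = n - 1" and "length bs = n - 1"
    and "F_completion nipH as scH scF ipF qH"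
    and "F_completion nipK bs scK scG ipG qK"
    and "hilbert_tensor scF ipF scG ipG scW ipW tens"
    and "GB_op scF ipF C1" and "GB_op scG ipG C2"
    and "dual_ctrl_frames scF ipF C1 (\<lambda>i. qH (fs i)) (\<lambda>i. qH (es i))"
    and "dual_ctrl_frames scG ipG C2 (\<lambda>j. qK (gs j)) (\<lambda>j. qK (hs j))"
    and "unitary_op scF ipF U" and "unitary_op scG ipG V"
    and "\<forall>x. C1 (U x) = U (C1 x)" and "\<forall>y. C2 (V y) = V (C2 y)"
  shows "dual_ctrl_frames2 scW ipW tens (tensor_op scW ipW tens C1 C2)
           (\<lambda>i j. tensor_op scW ipW tens U V (tens (qH (fs i)) (qK (gs j))))
           (\<lambda>i j. tensor_op scW ipW tens U V (tens (qH (es i)) (qK (hs j))))"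
proof -
  interpret hilbert_tensor_space scF ipF scG ipG scW ipW tens
    by unfold_locales (fact assms(8))
  have bounded: "bounded_op scF ipF C1" "bounded_op scG ipG C2"
    "bounded_op scF ipF U" "bounded_op scG ipG V"
    using assms(9,10,13,14) unfolding GB_op_def unitary_op_def by blast+
  have "dual_ctrl_frames scF ipF C1 (\<lambda>i. U (qH (fs i))) (\<lambda>i. U (qH (es i)))"
    using assms(13) assms(15)[rule_format] assms(11) by (rule F.dual_ctrl_frames_unitary_image)
  moreover have "dual_ctrl_frames scG ipG C2 (\<lambda>j. V (qK (gs j))) (\<lambda>j. V (qK (hs j)))"
    using assms(14) assms(16)[rule_format] assms(12) by (rule G.dual_ctrl_frames_unitary_image)
  ultimately show ?thesis
    using dual_ctrl_frames2_tensor[where T = "tensor_op scW ipW tens C1 C2" and CF = C1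
        and CG = C2, OF tensor_op_tens[OF bounded(1,2)]]
    by (simp add: tensor_op_tens[OF bounded(3,4)])
qed

end
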